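(* Let $T>0$, $r\ge0$, $\rho\in[-1,1]$, $\alpha\ge0$, $K>0$, and let $\mu,\sigma>0,a,b>0$ be constants. Let $P$ be the writer's price of a European put with strike $K$, i.e. the solution on $(0,\infty)^2\times[0,T]$ of $$P_t+\tilde\mu SP_S+rHP_H+\tfrac12\sigma^2S^2P_{SS}+\rho\sigma bSHP_{SH}+\tfrac12b^2H^2P_{HH}-rP=-\alpha\sqrt{1-\rho^2}\sigma S|P_S|,\quad P(S,H,T)=(K-S)_+,$$ with $\tilde\mu=\mu-(a-r)\rho\sigma/b$. Then $P$ does not depend on $H$ and, with $\tau=T-t$ and $\delta=r-\tilde\mu+\alpha\sqrt{1-\rho^2}\sigma$, $$P(S,t)=Ke^{-r\tau}\Phi\Big(\frac{\ln(K/S)-(r-\delta-\frac12\sigma^2)\tau}{\sigma\sqrt\tau}\Big)-Se^{-\delta\tau}\Phi\Big(\frac{\ln(K/S)-(r-\delta+\frac12\sigma^2)\tau}{\sigma\sqrt\tau}\Big),$$ where $\Phi$ is the standard normal cumulative distribution function.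
   Context: Model: non-traded asset $dS_t=\mu S_tdt+\sigma S_tdZ_t$ and traded asset $dH_t=aH_tdt+bH_tdW_t$, geometric Brownian motions with $Z,W$ standard Brownian motions of correlation $\rho$; $r$ is the riskless rate and $\alpha$ the writer's instantaneous Sharpe ratio. The PDE solution is the continuous viscosity solution in the class of locally bounded $u$ with $u/(1+(|\ln S|+|\ln H|)^k)\to0$ uniformly in $t$ as $|\ln S|+|\ln H|\to\infty$ for some $k>0$. *)

theory Defs
  imports "HOL-Probability.Probability"
begin

definition Phi :: "real \<Rightarrow> real" where
  "Phi x = measure (density lborel std_normal_density) {..x}"

definition dom_open :: "real \<Rightarrow> (real \<times> real \<times> real) set" where
  "dom_open T = {(S, H, t). 0 < S \<and> 0 < H \<and> 0 < t \<and> t < T}"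

definition dom_closed :: "real \<Rightarrow> (real \<times> real \<times> real) set" where
  "dom_closed T = {(S, H, t). 0 < S \<and> 0 < H \<and> 0 \<le> t \<and> t \<le> T}"

text \<open>C^2 test functions on an open set D, given together with their first partials
  (phiS, phiH, phit) and the spatial second partials phiSS, phiSH, phiHH
  (the remaining second partials, involving t, are existentially quantified).\<close>
definition C2_test ::
  "(real \<times> real \<times> real) set \<Rightarrow> (real \<times> real \<times> real \<Rightarrow> real) \<Rightarrow>
   (real \<times> real \<times> real \<Rightarrow> real) \<Rightarrow> (real \<times> real \<times> real \<Rightarrow> real) \<Rightarrow> (real \<times> real \<times> real \<Rightarrow> real) \<Rightarrow>
   (real \<times> real \<times> real \<Rightarrow> real) \<Rightarrow> (real \<times> real \<times> real \<Rightarrow> real) \<Rightarrow> (real \<times> real \<times> real \<Rightarrow> real) \<Rightarrow> bool"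
where
  "C2_test D phi phit phiS phiH phiSS phiSH phiHH \<longleftrightarrow>
     (\<exists>phiSt phiHt. 
        (\<forall>x\<in>D. (phi has_derivative (\<lambda>(dS, dH, dt). phiS x * dS + phiH x * dH + phit x * dt)) (at x)) \<and>
        (\<forall>x\<in>D. (phiS has_derivative (\<lambda>(dS, dH, dt). phiSS x * dS + phiSH x * dH + phiSt x * dt)) (at x)) \<and>
        (\<forall>x\<in>D. (phiH has_derivative (\<lambda>(dS, dH, dt). phiSH x * dS + phiHH x * dH + phiHt x * dt)) (at x)) \<and>
        continuous_on D phit \<and> continuous_on D phiSS \<and> continuous_on D phiSH \<and>
        continuous_on D phiHH \<and> continuous_on D phiSt \<and> continuous_on D phiHt)"

definition pde_op :: "real \<Rightarrow> real \<Rightarrow> real \<Rightarrow> real \<Rightarrow> real \<Rightarrow> real \<Rightarrow> real \<Rightarrow> real \<Rightarrow> real \<Rightarrow> real \<Rightarrow> real \<Rightarrow> real \<Rightarrow> real \<Rightarrow> real \<Rightarrow> real \<Rightarrow> real \<Rightarrow> real"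
where
  "pde_op mu sig a b r rho alpha S H u pt pS pH pSS pSH pHH =
     (let mut = mu - (a - r) * rho * sig / b in
      pt + mut * S * pS + r * H * pH + 1/2 * sig\<^sup>2 * S\<^sup>2 * pSS + rho * sig * b * S * H * pSH
        + 1/2 * b\<^sup>2 * H\<^sup>2 * pHH - r * u + alpha * sqrt (1 - rho\<^sup>2) * sig * S * \<bar>pS\<bar>)"

definition visc_sub where
  "visc_sub mu sig a b r rho alpha T u \<longleftrightarrow>
     (\<forall>phi phit phiS phiH phiSS phiSH phiHH S H t.
        C2_test (dom_open T) phi phit phiS phiH phiSS phiSH phiHH \<longrightarrow> (S, H, t) \<in> dom_open T \<longrightarrow>
        (\<exists>e>0. \<forall>y\<in>dom_open T. dist y (S, H, t) < e \<longrightarrow> u y - phi y \<le> u (S, H, t) - phi (S, H, t)) \<longrightarrow>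
        pde_op mu sig a b r rho alpha S H (u (S, H, t)) (phit (S, H, t)) (phiS (S, H, t)) (phiH (S, H, t))
          (phiSS (S, H, t)) (phiSH (S, H, t)) (phiHH (S, H, t)) \<ge> 0)"

definition visc_super where
  "visc_super mu sig a b r rho alpha T u \<longleftrightarrow>
     (\<forall>phi phit phiS phiH phiSS phiSH phiHH S H t.
        C2_test (dom_open T) phi phit phiS phiH phiSS phiSH phiHH \<longrightarrow> (S, H, t) \<in> dom_open T \<longrightarrow>
        (\<exists>e>0. \<forall>y\<in>dom_open T. dist y (S, H, t) < e \<longrightarrow> u y - phi y \<ge> u (S, H, t) - phi (S, H, t)) \<longrightarrow>
        pde_op mu sig a b r rho alpha S H (u (S, H, t)) (phit (S, H, t)) (phiS (S, H, t)) (phiH (S, H, t))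
          (phiSS (S, H, t)) (phiSH (S, H, t)) (phiHH (S, H, t)) \<le> 0)"

definition growth_class :: "real \<Rightarrow> (real \<times> real \<times> real \<Rightarrow> real) \<Rightarrow> bool" where
  "growth_class T u \<longleftrightarrow>
     (\<forall>x\<in>dom_closed T. \<exists>e>0. bounded (u ` (dom_closed T \<inter> ball x e))) \<and>
     (\<exists>k>0. \<forall>\<epsilon>>0. \<exists>R. \<forall>S H t. (S, H, t) \<in> dom_closed T \<longrightarrow> \<bar>ln S\<bar> + \<bar>ln H\<bar> \<ge> R \<longrightarrow>
        \<bar>u (S, H, t)\<bar> / (1 + (\<bar>ln S\<bar> + \<bar>ln H\<bar>) powr k) \<le> \<epsilon>)"

definition writer_put_price where
  "writer_put_price mu sig a b r rho alpha T K u \<longleftrightarrow>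
     continuous_on (dom_closed T) u \<and> growth_class T u \<and>
     visc_sub mu sig a b r rho alpha T u \<and> visc_super mu sig a b r rho alpha T u \<and>
     (\<forall>S H. 0 < S \<longrightarrow> 0 < H \<longrightarrow> u (S, H, T) = max (K - S) 0)"

end

theory Submission
  imports Defs "HOL-Real_Asymp.Real_Asymp"
begin

text \<open>
  The explicit formula is the Black--Scholes price of a put on an asset paying the dividend
  yield \<delta>. It does not depend on H and is decreasing in S, so along it the nonlinear term
  \<alpha> sqrt(1 - \<rho>^2) \<sigma> S |P_S| is linear and merely changes the drift of S into r - \<delta>: the
  formula is a classical solution of the pricing equation attaining the payoff at maturity.

  Uniqueness in the growth class is a comparison argument. If a viscosity subsolution u exceeded a
  classical supersolution v somewhere, then
  u - v - \<epsilon> exp(\<lambda>(T - t)) (S^2 + S^-2 + H^2 + H^-2) - \<eta>/t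
  would attain a positive maximum in the open domain: the penalty dominates the polylogarithmic
  growth of u - v as S or H tends to 0 or \<infinity>, it blows up at t = 0, and u \<le> v at t = T. For \<lambda>
  large the penalty is a strict classical supersolution, which contradicts the viscosity inequality
  at that maximum. Supersolutions reduce to subsolutions by u \<mapsto> -u, \<alpha> \<mapsto> -\<alpha>.
\<close>

section \<open>The standard normal distribution function\<close>

lemma Phi_eq_cdf: "Phi = cdf std_normal_distribution"
  by (auto simp: Phi_def cdf_def)

lemma Phi_nonneg: "0 \<le> Phi x"
  by (simp add: Phi_def)

lemma Phi_le_1: "Phi x \<le> 1"
  unfolding Phi_eq_cdf by (rule real_distribution.cdf_bounded_prob[OF real_dist_normal_dist])

lemma Phi_at_top: "(Phi \<longlongrightarrow> 1) at_top"
  unfolding Phi_eq_cdf by (rule real_distribution.cdf_lim_at_top_prob[OF real_dist_normal_dist])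

lemma Phi_at_bot: "(Phi \<longlongrightarrow> 0) at_bot"
  unfolding Phi_eq_cdf
  by (rule finite_borel_measure.cdf_lim_at_bot
        [OF real_distribution.finite_borel_measure_M[OF real_dist_normal_dist]])

lemma std_normal_density_le_1: "std_normal_density x \<le> 1"
proof -
  have "exp (- x\<^sup>2 / 2) \<le> 1" and "1 \<le> sqrt (2 * pi)"
    using pi_gt3 by auto
  then have "exp (- x\<^sup>2 / 2) \<le> sqrt (2 * pi)"
    by linarith
  then show ?thesis
    unfolding std_normal_density_def by (simp add: divide_le_eq)
qed

lemma continuous_on_std_normal_density[continuous_intros]:
  "continuous_on A f \<Longrightarrow> continuous_on A (\<lambda>x. std_normal_density (f x))"
  unfolding std_normal_density_def by (intro continuous_intros) auto

lemma Phi_diff_eq_integral: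
  assumes "c < x"
  shows "Phi x - Phi c = integral {c..x} std_normal_density"
proof -
  interpret prob_space std_normal_distribution
    by (rule prob_space_normal_density) simp
  have "Phi x - Phi c = measure std_normal_distribution {c<..x}"
    unfolding Phi_eq_cdf
    by (rule finite_borel_measure.cdf_diff_eq
          [OF real_distribution.finite_borel_measure_M[OF real_dist_normal_dist] assms])
  also have "\<dots> = integral\<^sup>L std_normal_distribution (indicator {c<..x})"
    by simp
  also have "\<dots> = (LINT t:{c<..x}|lborel. std_normal_density t)"
    by (subst integral_density) (auto simp: set_lebesgue_integral_def mult.commute)
  also have "\<dots> = (LINT t:{c<..<x}|lborel. std_normal_density t)"
    using AE_lborel_singleton[of x]
    by (intro set_integral_cong_set) (auto simp: set_borel_measurable_def elim!: eventually_mono)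
  also have "\<dots> = integral {c<..<x} std_normal_density"
    by (intro set_borel_integral_eq_integral)
       (simp add: set_integrable_def mult.commute[of "indicator _ _"] integrable_real_mult_indicator)
  finally show ?thesis
    by (simp add: integral_open_interval_real)
qed

lemma has_real_derivative_Phi: "(Phi has_real_derivative std_normal_density x) (at x)"
proof -
  have "((\<lambda>y. integral {x - 1..y} std_normal_density) has_real_derivative std_normal_density x)
      (at x within {x - 1..x + 1})"
    by (rule integral_has_real_derivative) (auto intro: continuous_on_std_normal_density[OF continuous_on_id])
  then have "((\<lambda>y. Phi (x - 1) + integral {x - 1..y} std_normal_density)
      has_real_derivative std_normal_density x) (at x)"
    using at_within_Icc_at[of "x - 1" x "x + 1"] by (auto intro!: derivative_eq_intros)
  then show ?thesis
    by (rule has_field_derivative_transform_within_open[where S = "{x - 1<..}"])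
       (auto simp: Phi_diff_eq_integral[symmetric])
qed

lemmas has_derivative_Phi = has_real_derivative_Phi[THEN DERIV_compose_FDERIV]

lemma isCont_Phi: "isCont Phi x"
  by (rule DERIV_isCont[OF has_real_derivative_Phi])

lemma continuous_on_Phi[continuous_intros]:
  "continuous_on A f \<Longrightarrow> continuous_on A (\<lambda>x. Phi (f x))"
  by (rule continuous_on_compose2[of UNIV Phi]) (auto intro: continuous_at_imp_continuous_on isCont_Phi)

lemma Phi_lipschitz: "\<bar>Phi x - Phi y\<bar> \<le> \<bar>x - y\<bar>"
  using field_differentiable_bound[of UNIV Phi std_normal_density 1 x y]
  by (auto simp: has_real_derivative_Phi std_normal_density_le_1)

section \<open>Test functions and the pricing operator\<close>

lemma open_dom_open: "open (dom_open T)"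
proof -
  have "dom_open T = {0<..} \<times> {0<..} \<times> {0<..<T}"
    by (auto simp: dom_open_def)
  then show ?thesis
    by (simp add: open_Times)
qed

lemma nonpos_on_dom_closed:
  fixes f :: "real \<times> real \<times> real \<Rightarrow> real"
  assumes "0 < T" and "continuous_on (dom_closed T) f" and "\<And>x. x \<in> dom_open T \<Longrightarrow> f x \<le> 0"
    and "x \<in> dom_closed T"
  shows "f x \<le> 0"
proof -
  obtain S H t where x: "x = (S, H, t)" "0 < S" "0 < H" "0 \<le> t" "t \<le> T"
    using assms(4) by (auto simp: dom_closed_def)
  let ?A = "{S} \<times> {H} \<times> {0<..<T}"
  have closure: "closure ?A = {S} \<times> {H} \<times> {0..T}"
    using assms(1) by (simp add: closure_Times)
  show ?thesis
  proof (rule continuous_le_on_closure[of ?A f])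
    show "continuous_on (closure ?A) f"
      unfolding closure using x by (auto intro: continuous_on_subset[OF assms(2)] simp: dom_closed_def)
    show "x \<in> closure ?A"
      unfolding closure using x by simp
    show "f y \<le> 0" if "y \<in> ?A" for y
      using that x by (intro assms(3)) (auto simp: dom_open_def)
  qed
qed

lemma C2_test_add:
  assumes "C2_test D f ft fS fH fSS fSH fHH" and "C2_test D g gt gS gH gSS gSH gHH"
  shows "C2_test D (\<lambda>x. f x + g x) (\<lambda>x. ft x + gt x) (\<lambda>x. fS x + gS x) (\<lambda>x. fH x + gH x)
    (\<lambda>x. fSS x + gSS x) (\<lambda>x. fSH x + gSH x) (\<lambda>x. fHH x + gHH x)"
proof -
  obtain fSt fHt gSt gHt where
    f: "\<forall>x\<in>D. (f has_derivative (\<lambda>(dS, dH, dt). fS x * dS + fH x * dH + ft x * dt)) (at x)"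
      "\<forall>x\<in>D. (fS has_derivative (\<lambda>(dS, dH, dt). fSS x * dS + fSH x * dH + fSt x * dt)) (at x)"
      "\<forall>x\<in>D. (fH has_derivative (\<lambda>(dS, dH, dt). fSH x * dS + fHH x * dH + fHt x * dt)) (at x)"
    and g: "\<forall>x\<in>D. (g has_derivative (\<lambda>(dS, dH, dt). gS x * dS + gH x * dH + gt x * dt)) (at x)"
      "\<forall>x\<in>D. (gS has_derivative (\<lambda>(dS, dH, dt). gSS x * dS + gSH x * dH + gSt x * dt)) (at x)"
      "\<forall>x\<in>D. (gH has_derivative (\<lambda>(dS, dH, dt). gSH x * dS + gHH x * dH + gHt x * dt)) (at x)"
    and cont: "continuous_on D ft" "continuous_on D fSS" "continuous_on D fSH" "continuous_on D fHH"
      "continuous_on D fSt" "continuous_on D fHt" "continuous_on D gt" "continuous_on D gSS"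
      "continuous_on D gSH" "continuous_on D gHH" "continuous_on D gSt" "continuous_on D gHt"
    using assms unfolding C2_test_def by blast
  show ?thesis
    unfolding C2_test_def
  proof (rule exI[of _ "\<lambda>x. fSt x + gSt x"], rule exI[of _ "\<lambda>x. fHt x + gHt x"],
      intro conjI ballI continuous_on_add cont)
    fix x
    assume "x \<in> D"
    then show "((\<lambda>x. f x + g x) has_derivative (\<lambda>(dS, dH, dt).
        (fS x + gS x) * dS + (fH x + gH x) * dH + (ft x + gt x) * dt)) (at x)"
      and "((\<lambda>x. fS x + gS x) has_derivative (\<lambda>(dS, dH, dt).
        (fSS x + gSS x) * dS + (fSH x + gSH x) * dH + (fSt x + gSt x) * dt)) (at x)"
      and "((\<lambda>x. fH x + gH x) has_derivative (\<lambda>(dS, dH, dt).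
        (fSH x + gSH x) * dS + (fHH x + gHH x) * dH + (fHt x + gHt x) * dt)) (at x)"
      using f g by (auto intro!: has_derivative_eq_rhs[OF has_derivative_add] simp: algebra_simps)
  qed
qed

lemma C2_test_uminus:
  assumes "C2_test D f ft fS fH fSS fSH fHH"
  shows "C2_test D (\<lambda>x. - f x) (\<lambda>x. - ft x) (\<lambda>x. - fS x) (\<lambda>x. - fH x)
    (\<lambda>x. - fSS x) (\<lambda>x. - fSH x) (\<lambda>x. - fHH x)"
proof -
  obtain fSt fHt where
    f: "\<forall>x\<in>D. (f has_derivative (\<lambda>(dS, dH, dt). fS x * dS + fH x * dH + ft x * dt)) (at x)"
      "\<forall>x\<in>D. (fS has_derivative (\<lambda>(dS, dH, dt). fSS x * dS + fSH x * dH + fSt x * dt)) (at x)"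
      "\<forall>x\<in>D. (fH has_derivative (\<lambda>(dS, dH, dt). fSH x * dS + fHH x * dH + fHt x * dt)) (at x)"
    and cont: "continuous_on D ft" "continuous_on D fSS" "continuous_on D fSH" "continuous_on D fHH"
      "continuous_on D fSt" "continuous_on D fHt"
    using assms unfolding C2_test_def by blast
  show ?thesis
    unfolding C2_test_def
  proof (rule exI[of _ "\<lambda>x. - fSt x"], rule exI[of _ "\<lambda>x. - fHt x"],
      intro conjI ballI continuous_on_minus cont)
    fix x
    assume "x \<in> D"
    then show "((\<lambda>x. - f x) has_derivative (\<lambda>(dS, dH, dt).
        - fS x * dS + - fH x * dH + - ft x * dt)) (at x)"
      and "((\<lambda>x. - fS x) has_derivative (\<lambda>(dS, dH, dt).
        - fSS x * dS + - fSH x * dH + - fSt x * dt)) (at x)"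
      and "((\<lambda>x. - fH x) has_derivative (\<lambda>(dS, dH, dt).
        - fSH x * dS + - fHH x * dH + - fHt x * dt)) (at x)"
      using f by (auto intro!: has_derivative_eq_rhs[OF has_derivative_minus] simp: algebra_simps)
  qed
qed

lemma pde_op_uminus:
  "pde_op mu sig a b r rho (- alpha) S H (- u) (- pt) (- pS) (- pH) (- pSS) (- pSH) (- pHH)
    = - pde_op mu sig a b r rho alpha S H u pt pS pH pSS pSH pHH"
  by (simp add: pde_op_def Let_def algebra_simps)

lemma visc_super_imp_visc_sub_uminus:
  assumes "visc_super mu sig a b r rho alpha T u"
  shows "visc_sub mu sig a b r rho (- alpha) T (\<lambda>x. - u x)"
  unfolding visc_sub_def
proof (intro allI impI)
  fix phi phit phiS phiH phiSS phiSH phiHH S H t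
  assume "C2_test (dom_open T) phi phit phiS phiH phiSS phiSH phiHH"
    and x: "(S, H, t) \<in> dom_open T"
    and "\<exists>e>0. \<forall>y\<in>dom_open T. dist y (S, H, t) < e \<longrightarrow>
      - u y - phi y \<le> - u (S, H, t) - phi (S, H, t)"
  then have "C2_test (dom_open T) (\<lambda>x. - phi x) (\<lambda>x. - phit x) (\<lambda>x. - phiS x) (\<lambda>x. - phiH x)
      (\<lambda>x. - phiSS x) (\<lambda>x. - phiSH x) (\<lambda>x. - phiHH x)"
    and "\<exists>e>0. \<forall>y\<in>dom_open T. dist y (S, H, t) < e \<longrightarrow>
      u y - - phi y \<ge> u (S, H, t) - - phi (S, H, t)"
    by (simp_all add: C2_test_uminus algebra_simps)
  with assms x have "pde_op mu sig a b r rho alpha S H (u (S, H, t)) (- phit (S, H, t)) (- phiS (S, H, t))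
      (- phiH (S, H, t)) (- phiSS (S, H, t)) (- phiSH (S, H, t)) (- phiHH (S, H, t)) \<le> 0"
    unfolding visc_super_def by blast
  then show "0 \<le> pde_op mu sig a b r rho (- alpha) S H (- u (S, H, t)) (phit (S, H, t)) (phiS (S, H, t))
      (phiH (S, H, t)) (phiSS (S, H, t)) (phiSH (S, H, t)) (phiHH (S, H, t))"
    using pde_op_uminus[of mu sig a b r rho alpha S H "u (S, H, t)" "- phit (S, H, t)"
        "- phiS (S, H, t)" "- phiH (S, H, t)" "- phiSS (S, H, t)" "- phiSH (S, H, t)" "- phiHH (S, H, t)"]
    by simp
qed

section \<open>The Black--Scholes put with dividend yield\<close>

locale black_scholes =
  fixes K r dl sig :: real
  assumes K_pos: "0 < K" and sig_pos: "0 < sig"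
begin

text \<open>\<open>d_minus\<close> and \<open>d_plus\<close> are -d2 and -d1 in the usual notation.\<close>

definition d :: "real \<Rightarrow> real \<Rightarrow> real \<Rightarrow> real" where
  "d c S tau = (ln (K / S) - c * tau) / (sig * sqrt tau)"

abbreviation "d_minus \<equiv> d (r - dl - 1/2 * sig\<^sup>2)"
abbreviation "d_plus \<equiv> d (r - dl + 1/2 * sig\<^sup>2)"

definition put :: "real \<Rightarrow> real \<Rightarrow> real" where
  "put S tau = K * exp (- r * tau) * Phi (d_minus S tau) - S * exp (- dl * tau) * Phi (d_plus S tau)"

definition put_S :: "real \<Rightarrow> real \<Rightarrow> real" where
  "put_S S tau = - exp (- dl * tau) * Phi (d_plus S tau)"

definition put_SS :: "real \<Rightarrow> real \<Rightarrow> real" where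
  "put_SS S tau = exp (- dl * tau) * std_normal_density (d_plus S tau) / (S * sig * sqrt tau)"

definition put_tau :: "real \<Rightarrow> real \<Rightarrow> real" where
  "put_tau S tau = - r * K * exp (- r * tau) * Phi (d_minus S tau)
     + dl * S * exp (- dl * tau) * Phi (d_plus S tau)
     + S * exp (- dl * tau) * std_normal_density (d_plus S tau) * sig / (2 * sqrt tau)"

definition put_S_tau :: "real \<Rightarrow> real \<Rightarrow> real" where
  "put_S_tau S tau = dl * exp (- dl * tau) * Phi (d_plus S tau)
     + exp (- dl * tau) * std_normal_density (d_plus S tau)
       * (ln (K / S) + (r - dl + 1/2 * sig\<^sup>2) * tau) / (2 * sig * tau * sqrt tau)"

lemma has_derivative_d:
  assumes f: "(f has_derivative f') (at x within X)" and g: "(g has_derivative g') (at x within X)"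
    and "0 < f x" and "0 < g x"
  shows "((\<lambda>y. d c (f y) (g y)) has_derivative
    (\<lambda>h. - f' h / (f x * sig * sqrt (g x))
         - (ln (K / f x) + c * g x) / (2 * sig * g x * sqrt (g x)) * g' h)) (at x within X)"
proof -
  have ln: "((\<lambda>y. ln (K / f y)) has_derivative (\<lambda>h. - f' h / f x)) (at x within X)"
    by (rule has_derivative_eq_rhs[OF DERIV_ln[THEN DERIV_compose_FDERIV,
          OF _ has_derivative_divide[OF has_derivative_const f]]])
       (use assms K_pos in \<open>auto simp: fun_eq_iff field_simps\<close>)
  have sq: "((\<lambda>y. sig * sqrt (g y)) has_derivative (\<lambda>h. sig * (g' h / (2 * sqrt (g x))))) (at x within X)"
    by (rule has_derivative_eq_rhs[OF has_derivative_mult_right[OF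
          DERIV_real_sqrt[THEN DERIV_compose_FDERIV, OF _ g]]])
       (use assms in \<open>auto simp: fun_eq_iff field_simps\<close>)
  have "((\<lambda>y. (ln (K / f y) - c * g y) / (sig * sqrt (g y))) has_derivative
      (\<lambda>h. ((- f' h / f x - c * g' h) * (sig * sqrt (g x))
            - (ln (K / f x) - c * g x) * (sig * (g' h / (2 * sqrt (g x)))))
           / (sig * sqrt (g x) * (sig * sqrt (g x))))) (at x within X)"
    by (intro has_derivative_divide' has_derivative_diff ln has_derivative_mult_right g sq)
       (use assms sig_pos in auto)
  moreover obtain q where "0 < q" and "g x = q\<^sup>2"
    using assms(4) by (intro that[of "sqrt (g x)"]) auto
  ultimately show ?thesis
    unfolding d_def using assms sig_pos
    by (elim has_derivative_eq_rhs) (simp add: fun_eq_iff field_simps power2_eq_square)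
qed

lemma d_minus_minus_d_plus: "0 < tau \<Longrightarrow> d_minus S tau - d_plus S tau = sig * sqrt tau"
  using sig_pos by (simp add: d_def field_simps power2_eq_square)

lemma density_d_minus:
  assumes "0 < S" and "0 < tau"
  shows "K * exp (- r * tau) * std_normal_density (d_minus S tau)
    = S * exp (- dl * tau) * std_normal_density (d_plus S tau)"
proof -
  obtain q where "0 < q" and "tau = q\<^sup>2"
    using assms(2) by (intro that[of "sqrt tau"]) auto
  then have "(d_plus S tau)\<^sup>2 / 2 = (d_minus S tau)\<^sup>2 / 2 - ln (K / S) + (r - dl) * tau"
    using sig_pos by (simp add: d_def field_simps power2_eq_square)
  then have "exp (- (d_plus S tau)\<^sup>2 / 2)
      = exp (- (d_minus S tau)\<^sup>2 / 2) * exp (ln (K / S)) * exp (- (r - dl) * tau)"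
    by (simp add: algebra_simps flip: exp_add)
  also have "exp (ln (K / S)) = K / S"
    using assms K_pos by simp
  finally have "S * exp (- dl * tau) * std_normal_density (d_plus S tau)
      = K * (exp (- dl * tau) * exp (- (r - dl) * tau)) * std_normal_density (d_minus S tau)"
    using assms unfolding std_normal_density_def by (simp add: field_simps)
  also have "exp (- dl * tau) * exp (- (r - dl) * tau) = exp (- r * tau)"
    by (simp add: algebra_simps flip: exp_add)
  finally show ?thesis
    by simp
qed

lemma has_derivative_put:
  assumes f: "(f has_derivative f') (at x within X)" and g: "(g has_derivative g') (at x within X)"
    and pos: "0 < f x" "0 < g x"
  shows "((\<lambda>y. put (f y) (g y)) has_derivative
    (\<lambda>h. put_S (f x) (g x) * f' h + put_tau (f x) (g x) * g' h)) (at x within X)"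
proof -
  have exp: "((\<lambda>y. exp (a * g y)) has_derivative (\<lambda>h. a * g' h * exp (a * g x))) (at x within X)"
    for a
    by (rule DERIV_exp[THEN DERIV_compose_FDERIV, OF has_derivative_mult_right[OF g]])
  note Phi_d = has_derivative_Phi[OF has_derivative_d[OF f g pos]]
  obtain q where q: "0 < q" "sqrt (g x) = q" "g x = q\<^sup>2"
    using pos(2) by (intro that[of "sqrt (g x)"]) auto
  \<comment> \<open>Abstracting these terms turns the claim into a rational identity once the density at
    \<open>d_minus\<close> is eliminated by \<open>density_d_minus\<close>.\<close>
  define Pm Pp E1 E2 N L where "Pm = Phi (d_minus (f x) (g x))" and "Pp = Phi (d_plus (f x) (g x))"
    and "E1 = exp (- r * g x)" and "E2 = exp (- dl * g x)"
    and "N = std_normal_density (d_plus (f x) (g x))" and "L = ln (K / f x)"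
  have "0 < E1"
    by (simp add: E1_def)
  have dens: "std_normal_density (d_minus (f x) (g x)) = f x * E2 * N / (K * E1)"
    using density_d_minus[OF pos] K_pos by (simp add: E1_def E2_def N_def field_simps)
  show ?thesis
    unfolding put_def
    by (rule has_derivative_eq_rhs[OF has_derivative_diff[OF
          has_derivative_mult[OF has_derivative_mult[OF has_derivative_const exp] Phi_d]
          has_derivative_mult[OF has_derivative_mult[OF f exp] Phi_d]]])
       (unfold dens put_S_def put_tau_def q(2) fun_eq_iff Pm_def[symmetric] Pp_def[symmetric]
          E1_def[symmetric] E2_def[symmetric] N_def[symmetric] L_def[symmetric],
        use pos K_pos sig_pos q \<open>0 < E1\<close> in \<open>simp add: field_simps power2_eq_square\<close>)
qed

lemma has_derivative_put_S:
  assumes f: "(f has_derivative f') (at x within X)" and g: "(g has_derivative g') (at x within X)"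
    and pos: "0 < f x" "0 < g x"
  shows "((\<lambda>y. put_S (f y) (g y)) has_derivative
    (\<lambda>h. put_SS (f x) (g x) * f' h + put_S_tau (f x) (g x) * g' h)) (at x within X)"
proof -
  have exp: "((\<lambda>y. exp (- dl * g y)) has_derivative (\<lambda>h. - dl * g' h * exp (- dl * g x)))
      (at x within X)"
    by (rule DERIV_exp[THEN DERIV_compose_FDERIV, OF has_derivative_mult_right[OF g]])
  show ?thesis
    unfolding put_S_def
    by (rule has_derivative_eq_rhs[OF has_derivative_mult[OF has_derivative_minus[OF exp]
          has_derivative_Phi[OF has_derivative_d[OF f g pos]]]])
       (use pos sig_pos in \<open>simp add: fun_eq_iff put_SS_def put_S_tau_def field_simps\<close>)
qed

lemma put_S_nonpos: "put_S S tau \<le> 0"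
  by (simp add: put_S_def Phi_nonneg)

lemma put_pde:
  assumes "0 < S" and "0 < tau"
  shows "- put_tau S tau + (r - dl) * S * put_S S tau + 1/2 * sig\<^sup>2 * S\<^sup>2 * put_SS S tau
    - r * put S tau = 0"
proof -
  have "1/2 * sig\<^sup>2 * S\<^sup>2 * put_SS S tau
      = S * exp (- dl * tau) * std_normal_density (d_plus S tau) * sig / (2 * sqrt tau)"
    using assms sig_pos by (simp add: put_SS_def power2_eq_square field_simps)
  then show ?thesis
    by (simp add: put_def put_S_def put_tau_def algebra_simps)
qed

lemma abs_put_le:
  assumes "0 < S" and "0 \<le> tau" and "tau \<le> T"
  shows "\<bar>put S tau\<bar> \<le> K * exp (\<bar>r\<bar> * T) + S * exp (\<bar>dl\<bar> * T)"
proof -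
  have term_bounds: "0 \<le> a * exp (- c * tau) * Phi z" "a * exp (- c * tau) * Phi z \<le> a * exp (\<bar>c\<bar> * T)"
    if "0 \<le> a" for a c z
  proof -
    have "- c * tau \<le> \<bar>c\<bar> * tau"
      using assms by (intro mult_right_mono) auto
    also have "\<dots> \<le> \<bar>c\<bar> * T"
      using assms by (intro mult_left_mono) auto
    finally have "a * exp (- c * tau) \<le> a * exp (\<bar>c\<bar> * T)"
      using that by (intro mult_left_mono) auto
    moreover have "a * exp (- c * tau) * Phi z \<le> a * exp (- c * tau)"
      using that by (intro mult_left_le Phi_le_1) auto
    ultimately show "a * exp (- c * tau) * Phi z \<le> a * exp (\<bar>c\<bar> * T)"
      by linarith
    show "0 \<le> a * exp (- c * tau) * Phi z"
      using that Phi_nonneg by simp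
  qed
  show ?thesis
    using term_bounds[of K r "d_minus S tau"] term_bounds[of S dl "d_plus S tau"] assms K_pos
    unfolding put_def abs_le_iff by linarith
qed

context
  fixes f g :: "'a \<Rightarrow> real" and F :: "'a filter" and S0 :: real
  assumes f: "(f \<longlongrightarrow> S0) F" and g: "(g \<longlongrightarrow> 0) F"
    and pos: "eventually (\<lambda>y. 0 < f y \<and> 0 < g y) F" and S0: "0 < S0"
begin

lemma d_numerator_tendsto: "((\<lambda>y. ln (K / f y) - c * g y) \<longlongrightarrow> ln (K / S0)) F"
  using K_pos S0 by (auto intro!: tendsto_eq_intros f g)

lemma d_denominator_tendsto: "((\<lambda>y. sig * sqrt (g y)) \<longlongrightarrow> 0) F"
  by (auto intro!: tendsto_eq_intros g)

lemma d_denominator_pos: "eventually (\<lambda>y. 0 < sig * sqrt (g y)) F"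
  using pos by eventually_elim (use sig_pos in simp)

lemma d_at_top: "S0 < K \<Longrightarrow> filterlim (\<lambda>y. d c (f y) (g y)) at_top F"
  unfolding d_def
  by (rule LIM_at_top_divide[OF d_numerator_tendsto _ d_denominator_tendsto d_denominator_pos])
     (use S0 in simp)

lemma d_at_bot:
  assumes "K < S0"
  shows "filterlim (\<lambda>y. d c (f y) (g y)) at_bot F"
proof -
  have "LIM y F. - (ln (K / f y) - c * g y) / (sig * sqrt (g y)) :> at_top"
    by (rule LIM_at_top_divide[OF tendsto_minus[OF d_numerator_tendsto] _ d_denominator_tendsto
          d_denominator_pos])
       (use assms K_pos in simp)
  then show ?thesis
    by (simp add: d_def filterlim_uminus_at_bot minus_divide_left)
qed

lemma Phi_d_minus_minus_Phi_d_plus_tendsto: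
  "((\<lambda>y. Phi (d_minus (f y) (g y)) - Phi (d_plus (f y) (g y))) \<longlongrightarrow> 0) F"
proof (rule tendsto_0_le[OF d_denominator_tendsto, where K = 1])
  show "eventually (\<lambda>y. norm (Phi (d_minus (f y) (g y)) - Phi (d_plus (f y) (g y)))
      \<le> norm (sig * sqrt (g y)) * 1) F"
    using pos
  proof eventually_elim
    case (elim y)
    then show ?case
      using Phi_lipschitz[of "d_minus (f y) (g y)" "d_plus (f y) (g y)"]
        d_minus_minus_d_plus[of "g y" "f y"] sig_pos
      by simp
  qed
qed

lemma put_tendsto_payoff: "((\<lambda>y. put (f y) (g y)) \<longlongrightarrow> max (K - S0) 0) F"
proof -
  define coef where "coef y = K * exp (- r * g y) - f y * exp (- dl * g y)" for y
  have coef: "(coef \<longlongrightarrow> K - S0) F"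
    unfolding coef_def by (auto intro!: tendsto_eq_intros f g)
  have main: "((\<lambda>y. coef y * Phi (d_minus (f y) (g y))) \<longlongrightarrow> max (K - S0) 0) F"
  proof (rule linorder_cases[of S0 K])
    assume less: "S0 < K"
    then show ?thesis
      using tendsto_mult[OF coef filterlim_compose[OF Phi_at_top d_at_top]] by simp
  next
    assume equal: "S0 = K"
    have "((\<lambda>y. coef y * Phi (d_minus (f y) (g y))) \<longlongrightarrow> 0) F"
    proof (rule tendsto_0_le[where K = 1])
      show "(coef \<longlongrightarrow> 0) F"
        using coef equal by simp
      show "eventually (\<lambda>y. norm (coef y * Phi (d_minus (f y) (g y))) \<le> norm (coef y) * 1) F"
        by (intro always_eventually allI) (simp add: abs_mult Phi_nonneg Phi_le_1 mult_left_le)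
    qed
    then show ?thesis
      using equal by simp
  next
    assume "K < S0"
    then show ?thesis
      using tendsto_mult[OF coef filterlim_compose[OF Phi_at_bot d_at_bot]] by simp
  qed
  have "((\<lambda>y. coef y * Phi (d_minus (f y) (g y))
      + f y * exp (- dl * g y) * (Phi (d_minus (f y) (g y)) - Phi (d_plus (f y) (g y))))
      \<longlongrightarrow> max (K - S0) 0 + S0 * exp (- dl * 0) * 0) F"
    by (intro tendsto_intros main f g Phi_d_minus_minus_Phi_d_plus_tendsto)
  then show ?thesis
    by (simp add: put_def coef_def algebra_simps)
qed

end

lemma has_derivative_put_at_triple:
  assumes "0 < S" and "t < T"
  shows "((\<lambda>(S, H, t). put S (T - t)) has_derivative
    (\<lambda>(dS, dH, dt). put_S S (T - t) * dS + 0 * dH + - put_tau S (T - t) * dt)) (at (S, H, t) within X)"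
  unfolding case_prod_unfold
  by (rule has_derivative_eq_rhs[OF has_derivative_put[OF has_derivative_fst[OF has_derivative_ident]
        has_derivative_diff[OF has_derivative_const has_derivative_snd[OF has_derivative_snd[OF
          has_derivative_ident]]]]])
     (use assms in auto)

lemma has_derivative_put_S_at_triple:
  assumes "0 < S" and "t < T"
  shows "((\<lambda>(S, H, t). put_S S (T - t)) has_derivative
    (\<lambda>(dS, dH, dt). put_SS S (T - t) * dS + 0 * dH + - put_S_tau S (T - t) * dt)) (at (S, H, t) within X)"
  unfolding case_prod_unfold
  by (rule has_derivative_eq_rhs[OF has_derivative_put_S[OF has_derivative_fst[OF has_derivative_ident]
        has_derivative_diff[OF has_derivative_const has_derivative_snd[OF has_derivative_snd[OF
          has_derivative_ident]]]]])
     (use assms in auto)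

definition price :: "real \<Rightarrow> real \<times> real \<times> real \<Rightarrow> real" where
  "price T = (\<lambda>(S, H, t). if t < T then put S (T - t) else max (K - S) 0)"

lemma price_at_maturity: "price T (S, H, T) = max (K - S) 0"
  by (simp add: price_def)

lemma put_at_triple_tendsto_payoff:
  assumes "0 < S"
  shows "((\<lambda>(S, H, t). put S (T - t)) \<longlongrightarrow> max (K - S) 0)
    (at (S, H, T) within dom_closed T \<inter> {y. snd (snd y) < T})"
proof -
  let ?F = "at (S, H, T) within dom_closed T \<inter> {y. snd (snd y) < T}"
  have "eventually (\<lambda>y. y \<in> dom_closed T \<inter> {y. snd (snd y) < T}) ?F"
    by (simp add: eventually_at_filter)
  then have "eventually (\<lambda>y. 0 < fst y \<and> 0 < T - snd (snd y)) ?F"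
    by eventually_elim (auto simp: dom_closed_def)
  then show ?thesis
    unfolding case_prod_unfold using assms
    by (intro put_tendsto_payoff) (auto intro!: tendsto_eq_intros)
qed

lemma price_tendsto:
  assumes "x \<in> dom_closed T"
  shows "(price T \<longlongrightarrow> price T x) (at x within dom_closed T)"
proof -
  obtain S H t where x: "x = (S, H, t)" "0 < S" "0 \<le> t" "t \<le> T"
    using assms by (auto simp: dom_closed_def)
  have eq: "price T = (\<lambda>y. if snd (snd y) < T then (\<lambda>(S, H, t). put S (T - t)) y else max (K - fst y) 0)"
    by (auto simp: price_def fun_eq_iff)
  have "((\<lambda>y. if snd (snd y) < T then (\<lambda>(S, H, t). put S (T - t)) y else max (K - fst y) 0)
      \<longlongrightarrow> price T x) (at x within dom_closed T)"
  proof (rule filterlim_at_within_If)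
    let ?F = "at x within dom_closed T \<inter> {y. snd (snd y) < T}"
    show "((\<lambda>(S, H, t). put S (T - t)) \<longlongrightarrow> price T x) ?F"
    proof (cases "t < T")
      case True
      then show ?thesis
        using has_derivative_continuous[OF has_derivative_put_at_triple[OF x(2) True]]
        by (simp add: continuous_within x price_def)
    next
      case False
      with x have "t = T"
        by simp
      with x show ?thesis
        using put_at_triple_tendsto_payoff[OF x(2)] by (simp add: price_def)
    qed
    show "((\<lambda>y. max (K - fst y) 0) \<longlongrightarrow> price T x) (at x within dom_closed T \<inter> {y. \<not> snd (snd y) < T})"
    proof (rule filterlim_at_within_closure_implies_filterlim)
      assume "x \<in> closure (dom_closed T \<inter> {y. \<not> snd (snd y) < T})"
      also have "\<dots> \<subseteq> {y. T \<le> snd (snd y)}"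
        by (intro closure_minimal closed_Collect_le continuous_intros) auto
      finally have "t = T"
        using x by simp
      then show ?thesis
        using x by (auto intro!: tendsto_eq_intros simp: price_def)
    qed
  qed
  then show ?thesis
    by (simp only: eq[symmetric])
qed

lemma continuous_on_price: "continuous_on (dom_closed T) (price T)"
  by (simp add: continuous_on_def price_tendsto)

lemma C2_test_price:
  "C2_test (dom_open T) (price T) (\<lambda>(S, H, t). - put_tau S (T - t)) (\<lambda>(S, H, t). put_S S (T - t))
    (\<lambda>_. 0) (\<lambda>(S, H, t). put_SS S (T - t)) (\<lambda>_. 0) (\<lambda>_. 0)"
  unfolding C2_test_def
proof (rule exI[of _ "\<lambda>(S, H, t). - put_S_tau S (T - t)"], rule exI[of _ "\<lambda>_. 0"], intro conjI ballI)
  fix x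
  assume x: "x \<in> dom_open T"
  then obtain S H t where xe: "x = (S, H, t)" "0 < S" "t < T"
    by (auto simp: dom_open_def)
  with x have x': "(S, H, t) \<in> dom_open T"
    by simp
  show "(price T has_derivative (\<lambda>(dS, dH, dt).
      (case x of (S, H, t) \<Rightarrow> put_S S (T - t)) * dS + 0 * dH
      + (case x of (S, H, t) \<Rightarrow> - put_tau S (T - t)) * dt)) (at x)"
    using has_derivative_transform_within_open[OF has_derivative_put_at_triple[OF xe(2,3)] open_dom_open x']
    by (auto simp: xe dom_open_def price_def)
  show "((\<lambda>(S, H, t). put_S S (T - t)) has_derivative (\<lambda>(dS, dH, dt).
      (case x of (S, H, t) \<Rightarrow> put_SS S (T - t)) * dS + 0 * dH
      + (case x of (S, H, t) \<Rightarrow> - put_S_tau S (T - t)) * dt)) (at x)"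
    using has_derivative_put_S_at_triple[OF xe(2,3)] by (simp add: xe)
  show "((\<lambda>_. 0) has_derivative (\<lambda>(dS, dH, dt). 0 * dS + 0 * dH + 0 * dt)) (at x)"
    for x :: "real \<times> real \<times> real"
    by (simp add: case_prod_unfold)
qed (unfold case_prod_unfold put_tau_def put_SS_def put_S_tau_def d_def,
     (intro continuous_intros; use sig_pos K_pos in \<open>auto simp: dom_open_def\<close>)+)

lemma price_solves_pde:
  assumes "dl = r - (mu - (a - r) * rho * sig / b) + alpha * sqrt (1 - rho\<^sup>2) * sig"
    and "(S, H, t) \<in> dom_open T"
  shows "pde_op mu sig a b r rho alpha S H (price T (S, H, t)) (- put_tau S (T - t))
    (put_S S (T - t)) 0 (put_SS S (T - t)) 0 0 = 0"
proof -
  have "0 < S" and "t < T"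
    using assms(2) by (auto simp: dom_open_def)
  moreover have mut: "mu - (a - r) * rho * sig / b = r - dl + alpha * sqrt (1 - rho\<^sup>2) * sig"
    using assms(1) by simp
  ultimately show ?thesis
    using put_pde[of S "T - t"] abs_of_nonpos[OF put_S_nonpos[of S "T - t"]]
    unfolding pde_op_def Let_def mut by (simp add: price_def algebra_simps)
qed

lemma abs_price_le:
  assumes "(S, H, t) \<in> dom_closed T"
  shows "\<bar>price T (S, H, t)\<bar> \<le> K * exp (\<bar>r\<bar> * T) + exp (\<bar>dl\<bar> * T) * S"
proof (cases "t < T")
  case True
  then show ?thesis
    using assms abs_put_le[of S "T - t" T] by (simp add: price_def dom_closed_def mult.commute)
next
  case False
  then have "price T (S, H, t) = max (K - S) 0" and "0 < S"
    using assms by (auto simp: price_def dom_closed_def)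
  moreover have "K \<le> K * exp (\<bar>r\<bar> * T)" and "0 \<le> exp (\<bar>dl\<bar> * T) * S"
    using assms K_pos by (auto simp: dom_closed_def)
  ultimately show ?thesis
    using K_pos by arith
qed

end

section \<open>Growth relative to the penalty weight\<close>

definition weight :: "real \<times> real \<times> real \<Rightarrow> real" where
  "weight = (\<lambda>(S, H, t). S\<^sup>2 + 1 / S\<^sup>2 + H\<^sup>2 + 1 / H\<^sup>2)"

lemma weight_pos: "0 < S \<Longrightarrow> 0 < weight (S, H, t)"
  by (simp add: weight_def add_pos_nonneg)

lemma exp_abs_ln_bounds:
  fixes x :: real
  assumes "0 < x"
  shows "1 \<le> exp \<bar>ln x\<bar>" and "(exp \<bar>ln x\<bar>)\<^sup>2 \<le> x\<^sup>2 + 1 / x\<^sup>2"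
    and "x\<^sup>2 + 1 / x\<^sup>2 \<le> 2 * (exp \<bar>ln x\<bar>)\<^sup>2"
proof -
  have "(exp \<bar>ln x\<bar>)\<^sup>2 \<le> x\<^sup>2 + 1 / x\<^sup>2 \<and> x\<^sup>2 + 1 / x\<^sup>2 \<le> 2 * (exp \<bar>ln x\<bar>)\<^sup>2"
  proof (cases "1 \<le> x")
    case True
    then have "exp \<bar>ln x\<bar> = x" and "1 / x\<^sup>2 \<le> x\<^sup>2"
      using assms by (auto simp: divide_le_eq one_le_power order.trans[OF _ one_le_power])
    then show ?thesis
      by simp
  next
    case False
    then have "exp \<bar>ln x\<bar> = 1 / x" and "x\<^sup>2 \<le> 1 / x\<^sup>2"
      using assms by (auto simp: exp_minus inverse_eq_divide le_divide_eq power_le_one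
          intro: order.trans[of _ 1])
    then show ?thesis
      by (simp add: power_one_over)
  qed
  then show "(exp \<bar>ln x\<bar>)\<^sup>2 \<le> x\<^sup>2 + 1 / x\<^sup>2" and "x\<^sup>2 + 1 / x\<^sup>2 \<le> 2 * (exp \<bar>ln x\<bar>)\<^sup>2"
    by auto
  show "1 \<le> exp \<bar>ln x\<bar>"
    by simp
qed

lemma weight_exp_log_bounds:
  assumes "0 < S" and "0 < H"
  shows "exp (\<bar>ln S\<bar> + \<bar>ln H\<bar>) \<le> weight (S, H, t)"
    and "weight (S, H, t) \<le> 4 * exp (2 * (\<bar>ln S\<bar> + \<bar>ln H\<bar>))"
proof -
  define a c where "a = exp \<bar>ln S\<bar>" and "c = exp \<bar>ln H\<bar>"
  note A = exp_abs_ln_bounds[OF assms(1), folded a_def]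
  note C = exp_abs_ln_bounds[OF assms(2), folded c_def]
  have exp_s: "exp (\<bar>ln S\<bar> + \<bar>ln H\<bar>) = a * c"
    by (simp add: a_def c_def exp_add)
  have "0 \<le> (a - c)\<^sup>2"
    by simp
  then have "a * c \<le> (a\<^sup>2 + c\<^sup>2) / 2"
    by (simp add: power2_diff)
  then show "exp (\<bar>ln S\<bar> + \<bar>ln H\<bar>) \<le> weight (S, H, t)"
    using A C by (simp add: exp_s weight_def)
  have "a\<^sup>2 \<le> a\<^sup>2 * c\<^sup>2" and "c\<^sup>2 \<le> a\<^sup>2 * c\<^sup>2"
    using A(1) C(1) by (simp_all add: mult_le_cancel_left1 mult_le_cancel_right1 one_le_power)
  moreover have "exp (2 * (\<bar>ln S\<bar> + \<bar>ln H\<bar>)) = a\<^sup>2 * c\<^sup>2"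
    unfolding mult_2 exp_add by (simp add: a_def c_def power2_eq_square)
  ultimately show "weight (S, H, t) \<le> 4 * exp (2 * (\<bar>ln S\<bar> + \<bar>ln H\<bar>))"
    using A(3) C(3) by (simp add: weight_def)
qed

definition weight_negligible :: "real \<Rightarrow> (real \<times> real \<times> real \<Rightarrow> real) \<Rightarrow> bool" where
  "weight_negligible T u \<longleftrightarrow>
     (\<forall>\<epsilon>>0. \<exists>R. \<forall>x\<in>dom_closed T. R \<le> weight x \<longrightarrow> \<bar>u x\<bar> \<le> \<epsilon> * weight x)"

lemma weight_negligible_diff:
  assumes "weight_negligible T u" and "weight_negligible T v"
  shows "weight_negligible T (\<lambda>x. u x - v x)"
  unfolding weight_negligible_def
proof (intro allI impI)
  fix \<epsilon> :: real
  assume "0 < \<epsilon>"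
  then obtain Ru Rv where
    Ru: "\<forall>x\<in>dom_closed T. Ru \<le> weight x \<longrightarrow> \<bar>u x\<bar> \<le> \<epsilon> / 2 * weight x" and
    Rv: "\<forall>x\<in>dom_closed T. Rv \<le> weight x \<longrightarrow> \<bar>v x\<bar> \<le> \<epsilon> / 2 * weight x"
    using assms unfolding weight_negligible_def by (meson half_gt_zero)
  show "\<exists>R. \<forall>x\<in>dom_closed T. R \<le> weight x \<longrightarrow> \<bar>u x - v x\<bar> \<le> \<epsilon> * weight x"
  proof (intro exI[of _ "max Ru Rv"] ballI impI)
    fix x
    assume "x \<in> dom_closed T" and "max Ru Rv \<le> weight x"
    then have "\<bar>u x\<bar> \<le> \<epsilon> / 2 * weight x" and "\<bar>v x\<bar> \<le> \<epsilon> / 2 * weight x"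
      using Ru Rv by auto
    then show "\<bar>u x - v x\<bar> \<le> \<epsilon> * weight x"
      by linarith
  qed
qed

lemma weight_negligible_if_affine_bound:
  assumes "\<And>S H t. (S, H, t) \<in> dom_closed T \<Longrightarrow> \<bar>u (S, H, t)\<bar> \<le> A + B * S"
  shows "weight_negligible T u"
  unfolding weight_negligible_def
proof (intro allI impI)
  fix \<epsilon> :: real
  assume "0 < \<epsilon>"
  then have "eventually (\<lambda>W. A + \<bar>B\<bar> * sqrt W \<le> \<epsilon> * W) at_top"
    by real_asymp
  then obtain R where R: "\<And>W. R \<le> W \<Longrightarrow> A + \<bar>B\<bar> * sqrt W \<le> \<epsilon> * W"
    by (auto simp: eventually_at_top_linorder)
  show "\<exists>R. \<forall>x\<in>dom_closed T. R \<le> weight x \<longrightarrow> \<bar>u x\<bar> \<le> \<epsilon> * weight x"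
  proof (intro exI[of _ R] ballI impI)
    fix x
    assume x: "x \<in> dom_closed T" and "R \<le> weight x"
    then obtain S H t where xe: "x = (S, H, t)" and "0 < S"
      by (auto simp: dom_closed_def)
    have "S\<^sup>2 \<le> weight x"
      by (simp add: xe weight_def)
    then have "S \<le> sqrt (weight x)"
      using real_le_rsqrt by blast
    then have "\<bar>B\<bar> * S \<le> \<bar>B\<bar> * sqrt (weight x)"
      by (intro mult_left_mono) auto
    moreover have "B * S \<le> \<bar>B\<bar> * S"
      using \<open>0 < S\<close> by (intro mult_right_mono) auto
    ultimately show "\<bar>u x\<bar> \<le> \<epsilon> * weight x"
      using assms[of S H t] x R[OF \<open>R \<le> weight x\<close>] by (simp add: xe)
  qed
qed

lemma weight_negligible_if_growth_class:
  assumes "growth_class T u"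
  shows "weight_negligible T u"
  unfolding weight_negligible_def
proof (intro allI impI)
  fix \<epsilon> :: real
  assume "0 < \<epsilon>"
  obtain k R0 where "0 < k" and R0: "\<forall>S H t. (S, H, t) \<in> dom_closed T \<longrightarrow>
      R0 \<le> \<bar>ln S\<bar> + \<bar>ln H\<bar> \<longrightarrow> \<bar>u (S, H, t)\<bar> / (1 + (\<bar>ln S\<bar> + \<bar>ln H\<bar>) powr k) \<le> 1"
    using assms unfolding growth_class_def by (meson zero_less_one)
  have "eventually (\<lambda>W. 1 + ln W powr k \<le> \<epsilon> * W) at_top"
    using \<open>0 < \<epsilon>\<close> by real_asymp
  then obtain R1 where R1: "\<And>W. R1 \<le> W \<Longrightarrow> 1 + ln W powr k \<le> \<epsilon> * W"
    by (auto simp: eventually_at_top_linorder)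
  show "\<exists>R. \<forall>x\<in>dom_closed T. R \<le> weight x \<longrightarrow> \<bar>u x\<bar> \<le> \<epsilon> * weight x"
  proof (intro exI[of _ "max R1 (4 * exp (2 * R0))"] ballI impI)
    fix x
    assume x: "x \<in> dom_closed T" and W: "max R1 (4 * exp (2 * R0)) \<le> weight x"
    then obtain S H t where xe: "x = (S, H, t)" "0 < S" "0 < H"
      by (auto simp: dom_closed_def)
    define s where "s = \<bar>ln S\<bar> + \<bar>ln H\<bar>"
    have exp_s: "exp s \<le> weight x" and "weight x \<le> 4 * exp (2 * s)"
      using weight_exp_log_bounds[OF xe(2,3)] by (simp_all add: xe s_def)
    moreover have "4 * exp (2 * R0) \<le> weight x"
      using W by simp
    ultimately have "exp (2 * R0) \<le> exp (2 * s)"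
      by linarith
    then have "R0 \<le> s"
      by simp
    then have "\<bar>u x\<bar> \<le> 1 + s powr k"
      using R0 x by (simp add: xe s_def divide_le_eq add_pos_nonneg)
    also have "s powr k \<le> ln (weight x) powr k"
      using exp_s \<open>0 < k\<close> weight_pos[OF xe(2)] by (intro powr_mono2) (auto simp: xe s_def ln_ge_iff)
    also have "1 + ln (weight x) powr k \<le> \<epsilon> * weight x"
      using R1 W by simp
    finally show "\<bar>u x\<bar> \<le> \<epsilon> * weight x"
      by simp
  qed
qed

section \<open>Penalisation and comparison\<close>

text \<open>
  The factor exp(lam (T - t)) lets the time derivative of the penalty absorb its first and second
  order terms in the operator, and eta/t keeps maxima away from t = 0, where no boundary condition
  is imposed.
\<close>

definition penalty :: "real \<Rightarrow> real \<Rightarrow> real \<Rightarrow> real \<Rightarrow> real \<times> real \<times> real \<Rightarrow> real" where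
  "penalty T lam eps eta = (\<lambda>(S, H, t). eps * exp (lam * (T - t)) * weight (S, H, t) + eta / t)"

lemma C2_test_penalty:
  "C2_test (dom_open T) (penalty T lam eps eta)
     (\<lambda>(S, H, t). - lam * eps * exp (lam * (T - t)) * weight (S, H, t) - eta / t\<^sup>2)
     (\<lambda>(S, H, t). eps * exp (lam * (T - t)) * (2 * S - 2 / S ^ 3))
     (\<lambda>(S, H, t). eps * exp (lam * (T - t)) * (2 * H - 2 / H ^ 3))
     (\<lambda>(S, H, t). eps * exp (lam * (T - t)) * (2 + 6 / S ^ 4))
     (\<lambda>_. 0)
     (\<lambda>(S, H, t). eps * exp (lam * (T - t)) * (2 + 6 / H ^ 4))"
  unfolding C2_test_def
proof (rule exI[of _ "\<lambda>(S, H, t). - lam * eps * exp (lam * (T - t)) * (2 * S - 2 / S ^ 3)"],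
    rule exI[of _ "\<lambda>(S, H, t). - lam * eps * exp (lam * (T - t)) * (2 * H - 2 / H ^ 3)"],
    intro conjI ballI)
  fix x
  assume "x \<in> dom_open T"
  then obtain S H t where x: "x = (S, H, t)" "0 < S" "0 < H" "0 < t"
    by (auto simp: dom_open_def)
  show "(penalty T lam eps eta has_derivative (\<lambda>(dS, dH, dt).
      (case x of (S, H, t) \<Rightarrow> eps * exp (lam * (T - t)) * (2 * S - 2 / S ^ 3)) * dS
      + (case x of (S, H, t) \<Rightarrow> eps * exp (lam * (T - t)) * (2 * H - 2 / H ^ 3)) * dH
      + (case x of (S, H, t) \<Rightarrow> - lam * eps * exp (lam * (T - t)) * weight (S, H, t) - eta / t\<^sup>2) * dt))
      (at x)"
    unfolding x penalty_def weight_def case_prod_unfold fst_conv snd_conv using x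
    by (auto intro!: derivative_eq_intros
        simp: fun_eq_iff field_simps power2_eq_square power3_eq_cube)
  show "((\<lambda>(S, H, t). eps * exp (lam * (T - t)) * (2 * S - 2 / S ^ 3)) has_derivative (\<lambda>(dS, dH, dt).
      (case x of (S, H, t) \<Rightarrow> eps * exp (lam * (T - t)) * (2 + 6 / S ^ 4)) * dS + 0 * dH
      + (case x of (S, H, t) \<Rightarrow> - lam * eps * exp (lam * (T - t)) * (2 * S - 2 / S ^ 3)) * dt))
      (at x)"
    unfolding x case_prod_unfold fst_conv snd_conv using x
    by (auto intro!: derivative_eq_intros
        simp: fun_eq_iff field_simps power2_eq_square power3_eq_cube power4_eq_xxxx)
  show "((\<lambda>(S, H, t). eps * exp (lam * (T - t)) * (2 * H - 2 / H ^ 3)) has_derivative (\<lambda>(dS, dH, dt).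
      0 * dS + (case x of (S, H, t) \<Rightarrow> eps * exp (lam * (T - t)) * (2 + 6 / H ^ 4)) * dH
      + (case x of (S, H, t) \<Rightarrow> - lam * eps * exp (lam * (T - t)) * (2 * H - 2 / H ^ 3)) * dt))
      (at x)"
    unfolding x case_prod_unfold fst_conv snd_conv using x
    by (auto intro!: derivative_eq_intros
        simp: fun_eq_iff field_simps power2_eq_square power3_eq_cube power4_eq_xxxx)
qed (unfold case_prod_unfold weight_def,
     (intro continuous_intros; auto simp: dom_open_def)+)

lemma penalty_derivative_bounds:
  assumes "0 < S" and "0 < H" and "0 \<le> xi"
  shows "\<bar>S * (xi * (2 * S - 2 / S ^ 3))\<bar> \<le> 2 * (xi * weight (S, H, t))"
    and "\<bar>H * (xi * (2 * H - 2 / H ^ 3))\<bar> \<le> 2 * (xi * weight (S, H, t))"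
    and "S\<^sup>2 * (xi * (2 + 6 / S ^ 4)) \<le> 6 * (xi * weight (S, H, t))"
    and "H\<^sup>2 * (xi * (2 + 6 / H ^ 4)) \<le> 6 * (xi * weight (S, H, t))"
proof -
  have first: "x * (2 * x - 2 / x ^ 3) = 2 * x\<^sup>2 - 2 / x\<^sup>2"
    and second: "x\<^sup>2 * (2 + 6 / x ^ 4) = 2 * x\<^sup>2 + 6 / x\<^sup>2" if "0 < x" for x :: real
    using that by (simp_all add: field_simps power2_eq_square power3_eq_cube power4_eq_xxxx)
  have "0 \<le> 1 / S\<^sup>2" and "0 \<le> 1 / H\<^sup>2"
    by simp_all
  then have "\<bar>2 * S\<^sup>2 - 2 / S\<^sup>2\<bar> \<le> 2 * weight (S, H, t)" and "\<bar>2 * H\<^sup>2 - 2 / H\<^sup>2\<bar> \<le> 2 * weight (S, H, t)"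
    and "2 * S\<^sup>2 + 6 / S\<^sup>2 \<le> 6 * weight (S, H, t)" and "2 * H\<^sup>2 + 6 / H\<^sup>2 \<le> 6 * weight (S, H, t)"
    by (auto simp: weight_def abs_le_iff)
  then show "\<bar>S * (xi * (2 * S - 2 / S ^ 3))\<bar> \<le> 2 * (xi * weight (S, H, t))"
    and "\<bar>H * (xi * (2 * H - 2 / H ^ 3))\<bar> \<le> 2 * (xi * weight (S, H, t))"
    and "S\<^sup>2 * (xi * (2 + 6 / S ^ 4)) \<le> 6 * (xi * weight (S, H, t))"
    and "H\<^sup>2 * (xi * (2 + 6 / H ^ 4)) \<le> 6 * (xi * weight (S, H, t))"
    using assms mult_left_mono[OF _ assms(3)]
    by (simp_all add: mult.left_commute[of _ xi] first second abs_mult)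
qed

definition penalty_rate :: "real \<Rightarrow> real \<Rightarrow> real \<Rightarrow> real \<Rightarrow> real \<Rightarrow> real \<Rightarrow> real \<Rightarrow> real" where
  "penalty_rate mu sig a b r rho alpha = 2 * \<bar>mu - (a - r) * rho * sig / b\<bar> + 2 * \<bar>r\<bar>
     + 3 * sig\<^sup>2 + 3 * b\<^sup>2 + 2 * \<bar>alpha * sqrt (1 - rho\<^sup>2) * sig\<bar>"

lemma pde_op_perturbation_le:
  assumes "0 < S" and "0 \<le> X"
    and qS: "\<bar>S * qS\<bar> \<le> 2 * X" and qH: "\<bar>H * qH\<bar> \<le> 2 * X"
    and qSS: "S\<^sup>2 * qSS \<le> 6 * X" and qHH: "H\<^sup>2 * qHH \<le> 6 * X"
  shows "pde_op mu sig a b r rho alpha S H u (pt + qt) (pS + qS) (pH + qH) (pSS + qSS) (pSH + 0) (pHH + qHH)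
    \<le> pde_op mu sig a b r rho alpha S H v pt pS pH pSS pSH pHH - r * (u - v) + qt
      + penalty_rate mu sig a b r rho alpha * X"
proof -
  define m c where "m = mu - (a - r) * rho * sig / b" and "c = alpha * sqrt (1 - rho\<^sup>2) * sig"
  have "m * (S * qS) \<le> \<bar>m\<bar> * (2 * X)" and "r * (H * qH) \<le> \<bar>r\<bar> * (2 * X)"
    using mult_left_mono[OF qS, of "\<bar>m\<bar>"] mult_left_mono[OF qH, of "\<bar>r\<bar>"]
    by (auto simp: abs_mult intro: order.trans[OF abs_ge_self])
  moreover have "1/2 * sig\<^sup>2 * (S\<^sup>2 * qSS) \<le> 1/2 * sig\<^sup>2 * (6 * X)"
    and "1/2 * b\<^sup>2 * (H\<^sup>2 * qHH) \<le> 1/2 * b\<^sup>2 * (6 * X)"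
    using qSS qHH by (intro mult_left_mono; simp)+
  moreover have "c * S * (\<bar>pS + qS\<bar> - \<bar>pS\<bar>) \<le> \<bar>c\<bar> * (2 * X)"
  proof -
    have "c * S * (\<bar>pS + qS\<bar> - \<bar>pS\<bar>) \<le> \<bar>c * S * (\<bar>pS + qS\<bar> - \<bar>pS\<bar>)\<bar>"
      by (rule abs_ge_self)
    also have "\<dots> = \<bar>c\<bar> * (S * \<bar>\<bar>pS + qS\<bar> - \<bar>pS\<bar>\<bar>)"
      using \<open>0 < S\<close> by (simp add: abs_mult)
    also have "\<dots> \<le> \<bar>c\<bar> * \<bar>S * qS\<bar>"
      using \<open>0 < S\<close> by (intro mult_left_mono) (auto simp: abs_mult)
    also have "\<dots> \<le> \<bar>c\<bar> * (2 * X)"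
      using qS by (intro mult_left_mono) auto
    finally show ?thesis .
  qed
  moreover have "pde_op mu sig a b r rho alpha S H u (pt + qt) (pS + qS) (pH + qH) (pSS + qSS) (pSH + 0) (pHH + qHH)
      = pde_op mu sig a b r rho alpha S H v pt pS pH pSS pSH pHH - r * (u - v) + qt
        + m * (S * qS) + r * (H * qH) + 1/2 * sig\<^sup>2 * (S\<^sup>2 * qSS) + 1/2 * b\<^sup>2 * (H\<^sup>2 * qHH)
        + c * S * (\<bar>pS + qS\<bar> - \<bar>pS\<bar>)"
    by (simp add: pde_op_def Let_def m_def c_def algebra_simps add_divide_distrib)
  moreover have "penalty_rate mu sig a b r rho alpha * X
      = \<bar>m\<bar> * (2 * X) + \<bar>r\<bar> * (2 * X) + 1/2 * sig\<^sup>2 * (6 * X) + 1/2 * b\<^sup>2 * (6 * X) + \<bar>c\<bar> * (2 * X)"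
    by (simp add: penalty_rate_def m_def c_def algebra_simps)
  ultimately show ?thesis
    by linarith
qed

lemma continuous_on_penalty:
  assumes "A \<subseteq> {(S, H, t). 0 < S \<and> 0 < H \<and> 0 < t}"
  shows "continuous_on A (penalty T lam eps eta)"
  unfolding penalty_def weight_def case_prod_unfold
  by (intro continuous_intros) (use assms in auto)

lemma penalty_lower_bound:
  assumes "0 < S" and "0 < t" and "t \<le> T" and "0 \<le> lam" and "0 \<le> eps"
  shows "eps * weight (S, H, t) + eta / t \<le> penalty T lam eps eta (S, H, t)"
proof -
  have "eps * weight (S, H, t) * 1 \<le> eps * weight (S, H, t) * exp (lam * (T - t))"
    using assms weight_pos[of S H t] by (intro mult_left_mono) auto
  then show ?thesis
    by (simp add: penalty_def mult_ac)
qed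

lemma weight_le_sq_imp_bounds:
  assumes "0 < S" and "0 < H" and "0 < m" and "weight (S, H, t) \<le> m\<^sup>2"
  shows "S \<in> {1/m..m}" and "H \<in> {1/m..m}"
proof -
  have bounds: "x \<in> {1/m..m}" if "0 < x" and "x\<^sup>2 + 1 / x\<^sup>2 \<le> m\<^sup>2" for x
  proof -
    have "0 \<le> 1 / x\<^sup>2" and "0 \<le> x\<^sup>2"
      by simp_all
    then have "x\<^sup>2 \<le> m\<^sup>2" and "(1 / x)\<^sup>2 \<le> m\<^sup>2"
      using that(2) unfolding power_one_over by linarith+
    then have "x \<le> m" and "1 / x \<le> m"
      using \<open>0 < m\<close> by (auto intro: power2_le_imp_le)
    then show ?thesis
      using that(1) \<open>0 < m\<close> by (simp add: field_simps)
  qed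
  have "0 \<le> S\<^sup>2 + 1 / S\<^sup>2" and "0 \<le> H\<^sup>2 + 1 / H\<^sup>2"
    and "weight (S, H, t) = (S\<^sup>2 + 1 / S\<^sup>2) + (H\<^sup>2 + 1 / H\<^sup>2)"
    by (simp_all add: weight_def)
  then have "S\<^sup>2 + 1 / S\<^sup>2 \<le> m\<^sup>2" and "H\<^sup>2 + 1 / H\<^sup>2 \<le> m\<^sup>2"
    using assms(4) by linarith+
  then show "S \<in> {1/m..m}" and "H \<in> {1/m..m}"
    using assms(1,2) by (blast intro: bounds)+
qed

lemma attains_max_if_negative_outside:
  fixes f :: "'a::topological_space \<Rightarrow> real"
  assumes "compact C" and "continuous_on C f" and "x0 \<in> C" and "0 \<le> f x0"
    and "\<And>y. y \<in> D \<Longrightarrow> y \<notin> C \<Longrightarrow> f y < 0"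
  obtains q where "q \<in> C" and "\<And>y. y \<in> C \<union> D \<Longrightarrow> f y \<le> f q"
proof -
  obtain q where "q \<in> C" and q: "\<And>y. y \<in> C \<Longrightarrow> f y \<le> f q"
    using continuous_attains_sup[OF assms(1) _ assms(2)] assms(3) by auto
  moreover have "f y \<le> f q" if "y \<in> D" "y \<notin> C" for y
    using assms(5)[OF that] q[OF assms(3)] assms(4) by linarith
  ultimately show ?thesis
    using that by blast
qed

definition truncated_domain :: "real \<Rightarrow> real \<Rightarrow> real \<Rightarrow> (real \<times> real \<times> real) set" where
  "truncated_domain T m s = {1/m..m} \<times> {1/m..m} \<times> {s..T}"

lemma truncated_domain_subset: "0 < m \<Longrightarrow> 0 \<le> s \<Longrightarrow> truncated_domain T m s \<subseteq> dom_closed T"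
  by (auto simp: truncated_domain_def dom_closed_def intro: less_le_trans[of 0 "1/m"])

lemma compact_truncated_domain: "compact (truncated_domain T m s)"
  by (simp add: truncated_domain_def compact_Times)

lemma penalized_negative_outside_truncated_domain:
  assumes "0 \<le> lam" and "0 \<le> eps" and "0 < eta" and "0 < m" and "0 < s"
    and large: "\<And>x. x \<in> dom_closed T \<Longrightarrow> m\<^sup>2 \<le> weight x \<Longrightarrow> \<bar>w x\<bar> \<le> eps * weight x"
    and early: "\<And>x. x \<in> truncated_domain T m 0 \<Longrightarrow> w x < eta / s"
    and y: "y \<in> dom_open T" "y \<notin> truncated_domain T m s"
  shows "w y - penalty T lam eps eta y < 0"
proof -
  obtain S H t where ye: "y = (S, H, t)" "0 < S" "0 < H" "0 < t" "t < T"
    using y(1) by (auto simp: dom_open_def)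
  have pen: "eps * weight y + eta / t \<le> penalty T lam eps eta y"
    using penalty_lower_bound[of S t T lam eps H eta] ye assms by simp
  have "0 < eta / t" and "0 \<le> eps * weight y"
    using ye weight_pos[of S H t] assms by simp_all
  show ?thesis
  proof (cases "m\<^sup>2 \<le> weight y")
    case True
    then have "\<bar>w y\<bar> \<le> eps * weight y"
      using large y(1) ye by (auto simp: dom_closed_def dom_open_def)
    with pen \<open>0 < eta / t\<close> show ?thesis
      by linarith
  next
    case False
    then have "S \<in> {1/m..m}" and "H \<in> {1/m..m}"
      using weight_le_sq_imp_bounds[of S H m t] ye \<open>0 < m\<close> by auto
    with y(2) ye have "t < s" and "y \<in> truncated_domain T m 0"
      by (auto simp: truncated_domain_def)
    then have "w y < eta / s" and "eta / s \<le> eta / t"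
      using early ye \<open>0 < eta\<close> by (auto intro: divide_left_mono)
    with pen \<open>0 \<le> eps * weight y\<close> show ?thesis
      by linarith
  qed
qed

lemma penalized_positive_imp_dom_open:
  assumes "0 < T" and "0 \<le> lam" and "0 \<le> eps" and "0 < eta" and "0 < m" and "0 < s"
    and terminal: "\<And>S H. 0 < S \<Longrightarrow> 0 < H \<Longrightarrow> w (S, H, T) \<le> 0"
    and q: "q \<in> truncated_domain T m s" and pos: "0 < w q - penalty T lam eps eta q"
  shows "q \<in> dom_open T"
proof -
  obtain S H t where "q = (S, H, t)" "1/m \<le> S" "1/m \<le> H" "s \<le> t" "t \<le> T"
    using q by (cases q) (auto simp: truncated_domain_def)
  moreover have "0 < 1/m"
    using \<open>0 < m\<close> by simp
  ultimately have qe: "q = (S, H, t)" "0 < S" "0 < H" "0 < t" "t \<le> T"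
    using \<open>0 < s\<close> by linarith+
  have "t \<noteq> T"
  proof
    assume "t = T"
    then have "w q \<le> 0" and "eps * weight q + eta / T \<le> penalty T lam eps eta q"
      using terminal[OF qe(2,3)] penalty_lower_bound[of S t T lam eps H eta] qe assms by simp_all
    moreover have "0 \<le> eps * weight q" and "0 < eta / T"
      using assms weight_pos[of S H t] qe by simp_all
    ultimately show False
      using pos by linarith
  qed
  with qe show ?thesis
    by (simp add: dom_open_def)
qed

lemma penalty_at_point_le:
  assumes "0 < S0" and "0 < t0" and "t0 \<le> T" and "0 \<le> lam" and "0 < \<theta>"
  shows "penalty T lam (\<theta> / (4 * exp (lam * T) * weight (S0, H0, t0))) (\<theta> * t0 / 4) (S0, H0, t0) \<le> \<theta> / 2"
proof -
  define eps where "eps = \<theta> / (4 * exp (lam * T) * weight (S0, H0, t0))"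
  have W0: "0 < weight (S0, H0, t0)"
    using weight_pos assms by simp
  have "exp (lam * (T - t0)) \<le> exp (lam * T)"
    using assms by (simp add: mult_left_mono)
  then have "eps * exp (lam * (T - t0)) * weight (S0, H0, t0) \<le> eps * exp (lam * T) * weight (S0, H0, t0)"
    using W0 assms by (intro mult_right_mono mult_left_mono) (auto simp: eps_def)
  also have "\<dots> = \<theta> / 4"
    using W0 by (simp add: eps_def)
  finally show ?thesis
    using assms by (simp add: penalty_def eps_def[symmetric])
qed

lemma exists_small_time_bound:
  fixes w :: "'a::topological_space \<Rightarrow> real"
  assumes "compact C" and "continuous_on C w" and "0 < eta" and "0 < t0"
  obtains s where "0 < s" and "s \<le> t0" and "\<And>x. x \<in> C \<Longrightarrow> w x < eta / s"
proof -
  obtain B where B: "\<forall>x\<in>C. \<bar>w x\<bar> \<le> B"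
    using compact_imp_bounded[OF compact_continuous_image[OF assms(2,1)]] unfolding bounded_iff by auto
  define s where "s = min t0 (eta / (\<bar>B\<bar> + 1))"
  have "0 < s" and "s \<le> t0" and "s \<le> eta / (\<bar>B\<bar> + 1)"
    using assms by (auto simp: s_def)
  then have "\<bar>B\<bar> + 1 \<le> eta / s"
    by (simp add: pos_le_divide_eq mult.commute)
  moreover have "w x \<le> \<bar>B\<bar>" if "x \<in> C" for x
    using B that by fastforce
  ultimately show ?thesis
    using that[of s] \<open>0 < s\<close> \<open>s \<le> t0\<close> by fastforce
qed

lemma penalized_attains_max:
  assumes "0 \<le> lam" and "0 \<le> eps" and "0 < eta" and "0 < m" and "0 < s"
    and cont: "continuous_on (dom_closed T) w"
    and large: "\<And>x. x \<in> dom_closed T \<Longrightarrow> m\<^sup>2 \<le> weight x \<Longrightarrow> \<bar>w x\<bar> \<le> eps * weight x"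
    and early: "\<And>x. x \<in> truncated_domain T m 0 \<Longrightarrow> w x < eta / s"
    and x0: "x0 \<in> truncated_domain T m s" and "0 \<le> w x0 - penalty T lam eps eta x0"
  obtains q where "q \<in> truncated_domain T m s"
    and "\<And>y. y \<in> truncated_domain T m s \<union> dom_open T \<Longrightarrow>
      w y - penalty T lam eps eta y \<le> w q - penalty T lam eps eta q"
proof -
  have "continuous_on (truncated_domain T m s) (\<lambda>y. w y - penalty T lam eps eta y)"
    using truncated_domain_subset[OF \<open>0 < m\<close>] \<open>0 < s\<close> \<open>0 < m\<close>
    by (intro continuous_on_diff continuous_on_subset[OF cont] continuous_on_penalty)
       (auto simp: truncated_domain_def intro: less_le_trans[of 0 "1/m"] less_le_trans[of 0 s])
  moreover have "w y - penalty T lam eps eta y < 0"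
    if "y \<in> dom_open T" and "y \<notin> truncated_domain T m s" for y
    by (rule penalized_negative_outside_truncated_domain[OF assms(1-5) large early that])
  ultimately show ?thesis
    using attains_max_if_negative_outside[OF compact_truncated_domain _ x0] assms(10) that
    by blast
qed

lemma penalized_max_exists:
  assumes "0 < T" and "0 \<le> lam" and cont: "continuous_on (dom_closed T) w"
    and terminal: "\<And>S H. 0 < S \<Longrightarrow> 0 < H \<Longrightarrow> w (S, H, T) \<le> 0"
    and negligible: "weight_negligible T w"
    and x0: "x0 \<in> dom_open T" and "0 < w x0"
  obtains eps eta q where "0 < eps" and "0 < eta" and "q \<in> dom_open T"
    and "0 < w q - penalty T lam eps eta q"
    and "\<And>y. y \<in> dom_open T \<Longrightarrow> w y - penalty T lam eps eta y \<le> w q - penalty T lam eps eta q"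
proof -
  obtain S0 H0 t0 where x0e: "x0 = (S0, H0, t0)" "0 < S0" "0 < H0" "0 < t0" "t0 < T"
    using x0 by (auto simp: dom_open_def)
  define eps where "eps = w x0 / (4 * exp (lam * T) * weight x0)"
  define eta where "eta = w x0 * t0 / 4"
  have eps: "0 < eps" and eta: "0 < eta"
    using \<open>0 < w x0\<close> weight_pos[of S0 H0 t0] x0e by (simp_all add: eps_def eta_def)
  have x0_pos: "w x0 / 2 \<le> w x0 - penalty T lam eps eta x0"
    using penalty_at_point_le[of S0 t0 T lam "w x0" H0] x0e \<open>0 \<le> lam\<close> \<open>0 < w x0\<close>
    by (simp add: eps_def eta_def)
  obtain R where R: "\<forall>x\<in>dom_closed T. R \<le> weight x \<longrightarrow> \<bar>w x\<bar> \<le> eps * weight x"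
    using negligible eps unfolding weight_negligible_def by blast
  define m where "m = sqrt (max R (weight x0))"
  have m: "0 < m" and m_sq: "m\<^sup>2 = max R (weight x0)"
    using weight_pos[of S0 H0 t0] x0e by (auto simp: m_def)
  obtain s where s: "0 < s" "s \<le> t0" and early: "\<And>x. x \<in> truncated_domain T m 0 \<Longrightarrow> w x < eta / s"
    using exists_small_time_bound[OF compact_truncated_domain
        continuous_on_subset[OF cont truncated_domain_subset[OF m]] eta x0e(4)] by auto
  have x0_trunc: "x0 \<in> truncated_domain T m s"
    using weight_le_sq_imp_bounds[of S0 H0 m t0] x0e m m_sq s
    by (auto simp: truncated_domain_def)
  have large: "\<And>x. x \<in> dom_closed T \<Longrightarrow> m\<^sup>2 \<le> weight x \<Longrightarrow> \<bar>w x\<bar> \<le> eps * weight x"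
    using R m_sq by auto
  have "0 \<le> w x0 - penalty T lam eps eta x0"
    using x0_pos \<open>0 < w x0\<close> by linarith
  then obtain q where q: "q \<in> truncated_domain T m s" and q_max: "\<And>y. y \<in> truncated_domain T m s \<union> dom_open T
      \<Longrightarrow> w y - penalty T lam eps eta y \<le> w q - penalty T lam eps eta q"
    using penalized_attains_max[OF \<open>0 \<le> lam\<close> less_imp_le[OF eps] eta m s(1) cont large early x0_trunc]
    by blast
  have "0 < w q - penalty T lam eps eta q"
    using x0_pos q_max[of x0] x0_trunc \<open>0 < w x0\<close> by auto
  moreover have "q \<in> dom_open T"
    using penalized_positive_imp_dom_open[of T lam eps eta m s w, OF \<open>0 < T\<close> \<open>0 \<le> lam\<close> _ eta m s(1)
        terminal q] eps calculation by simp
  ultimately show ?thesis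
    using that[of eps eta q] eps eta q_max by simp
qed

lemma pde_op_penalized_test_neg:
  assumes "0 \<le> r" and "0 < S" and "0 < H" and "0 < t" and "0 \<le> eps" and "0 < eta"
    and lam: "lam = penalty_rate mu sig a b r rho alpha" and "v0 \<le> u0"
    and v0: "pde_op mu sig a b r rho alpha S H v0 pt pS pH pSS pSH pHH \<le> 0"
  shows "pde_op mu sig a b r rho alpha S H u0
    (pt + (- lam * eps * exp (lam * (T - t)) * weight (S, H, t) - eta / t\<^sup>2))
    (pS + eps * exp (lam * (T - t)) * (2 * S - 2 / S ^ 3)) (pH + eps * exp (lam * (T - t)) * (2 * H - 2 / H ^ 3))
    (pSS + eps * exp (lam * (T - t)) * (2 + 6 / S ^ 4)) (pSH + 0)
    (pHH + eps * exp (lam * (T - t)) * (2 + 6 / H ^ 4)) < 0"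
proof -
  define xi where "xi = eps * exp (lam * (T - t))"
  have "0 \<le> xi"
    using \<open>0 \<le> eps\<close> by (simp add: xi_def)
  have "pde_op mu sig a b r rho alpha S H u0 (pt + (- lam * xi * weight (S, H, t) - eta / t\<^sup>2))
      (pS + xi * (2 * S - 2 / S ^ 3)) (pH + xi * (2 * H - 2 / H ^ 3)) (pSS + xi * (2 + 6 / S ^ 4))
      (pSH + 0) (pHH + xi * (2 + 6 / H ^ 4))
    \<le> pde_op mu sig a b r rho alpha S H v0 pt pS pH pSS pSH pHH - r * (u0 - v0)
      + (- lam * xi * weight (S, H, t) - eta / t\<^sup>2) + lam * (xi * weight (S, H, t))"
    unfolding lam
    by (rule pde_op_perturbation_le)
       (use assms \<open>0 \<le> xi\<close> weight_pos[OF \<open>0 < S\<close>] penalty_derivative_bounds[of S H xi t] in auto)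
  moreover have "0 \<le> r * (u0 - v0)" and "0 < eta / t\<^sup>2"
    using assms by simp_all
  ultimately show ?thesis
    using v0 by (simp add: xi_def algebra_simps)
qed

lemma no_positive_penalized_max:
  assumes "0 \<le> r" and sub: "visc_sub mu sig a b r rho alpha T u"
    and v_C2: "C2_test (dom_open T) v vt vS vH vSS vSH vHH"
    and q: "(S, H, t) \<in> dom_open T" and "0 < eps" and "0 < eta"
    and super: "pde_op mu sig a b r rho alpha S H (v (S, H, t)) (vt (S, H, t)) (vS (S, H, t))
      (vH (S, H, t)) (vSS (S, H, t)) (vSH (S, H, t)) (vHH (S, H, t)) \<le> 0"
    and lam: "lam = penalty_rate mu sig a b r rho alpha"
    and q_pos: "0 < u (S, H, t) - v (S, H, t) - penalty T lam eps eta (S, H, t)"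
    and q_max: "\<And>y. y \<in> dom_open T \<Longrightarrow> u y - v y - penalty T lam eps eta y
      \<le> u (S, H, t) - v (S, H, t) - penalty T lam eps eta (S, H, t)"
  shows False
proof -
  have "0 < S" "0 < H" "0 < t" "t < T"
    using q by (auto simp: dom_open_def)
  moreover have "0 \<le> lam"
    by (simp add: lam penalty_rate_def)
  moreover have "0 < eps * weight (S, H, t) + eta / t"
    using \<open>0 < eps\<close> \<open>0 < eta\<close> \<open>0 < t\<close> weight_pos[OF \<open>0 < S\<close>] by (simp add: add_pos_pos)
  ultimately have "v (S, H, t) \<le> u (S, H, t)"
    using q_pos penalty_lower_bound[of S t T lam eps H eta] \<open>0 < eps\<close> by simp
  have "\<exists>e>0. \<forall>y\<in>dom_open T. dist y (S, H, t) < e \<longrightarrow> u y - (v y + penalty T lam eps eta y)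
      \<le> u (S, H, t) - (v (S, H, t) + penalty T lam eps eta (S, H, t))"
    using q_max by (intro exI[of _ 1]) (auto simp: algebra_simps)
  from sub[unfolded visc_sub_def, rule_format, OF C2_test_add[OF v_C2 C2_test_penalty] q this]
  have "0 \<le> pde_op mu sig a b r rho alpha S H (u (S, H, t))
    (vt (S, H, t) + (- lam * eps * exp (lam * (T - t)) * weight (S, H, t) - eta / t\<^sup>2))
    (vS (S, H, t) + eps * exp (lam * (T - t)) * (2 * S - 2 / S ^ 3))
    (vH (S, H, t) + eps * exp (lam * (T - t)) * (2 * H - 2 / H ^ 3))
    (vSS (S, H, t) + eps * exp (lam * (T - t)) * (2 + 6 / S ^ 4)) (vSH (S, H, t) + 0)
    (vHH (S, H, t) + eps * exp (lam * (T - t)) * (2 + 6 / H ^ 4))" (is "0 \<le> ?P")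
    by simp
  moreover have "?P < 0"
    by (rule pde_op_penalized_test_neg[OF \<open>0 \<le> r\<close> \<open>0 < S\<close> \<open>0 < H\<close> \<open>0 < t\<close> _ \<open>0 < eta\<close> lam
          \<open>v (S, H, t) \<le> u (S, H, t)\<close> super])
       (use \<open>0 < eps\<close> in simp)
  ultimately show False
    by linarith
qed

lemma comparison_with_classical_supersolution:
  assumes "0 < T" and "0 \<le> r"
    and sub: "visc_sub mu sig a b r rho alpha T u" and u_cont: "continuous_on (dom_closed T) u"
    and v_C2: "C2_test (dom_open T) v vt vS vH vSS vSH vHH" and v_cont: "continuous_on (dom_closed T) v"
    and super: "\<And>S H t. (S, H, t) \<in> dom_open T \<Longrightarrow>
      pde_op mu sig a b r rho alpha S H (v (S, H, t)) (vt (S, H, t)) (vS (S, H, t)) (vH (S, H, t))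
        (vSS (S, H, t)) (vSH (S, H, t)) (vHH (S, H, t)) \<le> 0"
    and terminal: "\<And>S H. 0 < S \<Longrightarrow> 0 < H \<Longrightarrow> u (S, H, T) \<le> v (S, H, T)"
    and negligible: "weight_negligible T (\<lambda>x. u x - v x)"
    and "x \<in> dom_closed T"
  shows "u x \<le> v x"
proof -
  define lam where "lam = penalty_rate mu sig a b r rho alpha"
  have "0 \<le> lam"
    by (simp add: lam_def penalty_rate_def)
  have w_T: "u (S, H, T) - v (S, H, T) \<le> 0" if "0 < S" and "0 < H" for S H
    using terminal[OF that] by simp
  have "u x - v x \<le> 0" if x: "x \<in> dom_open T" for x
  proof (rule ccontr)
    assume "\<not> u x - v x \<le> 0"
    then have "0 < u x - v x"
      by simp
    then obtain eps eta q where "0 < eps" "0 < eta" "q \<in> dom_open T"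
      "0 < u q - v q - penalty T lam eps eta q"
      "\<And>y. y \<in> dom_open T \<Longrightarrow> u y - v y - penalty T lam eps eta y \<le> u q - v q - penalty T lam eps eta q"
      using penalized_max_exists[of T lam "\<lambda>x. u x - v x", OF \<open>0 < T\<close> \<open>0 \<le> lam\<close>
          continuous_on_diff[OF u_cont v_cont] w_T negligible x]
      by blast
    then show False
      using no_positive_penalized_max[OF \<open>0 \<le> r\<close> sub v_C2 _ _ _ super lam_def]
      by (cases q) blast
  qed
  from nonpos_on_dom_closed[OF \<open>0 < T\<close> continuous_on_diff[OF u_cont v_cont] this \<open>x \<in> dom_closed T\<close>]
  show ?thesis
    by simp
qed

lemma comparison_with_classical_subsolution:
  assumes "0 < T" and "0 \<le> r"
    and super: "visc_super mu sig a b r rho alpha T u" and u_cont: "continuous_on (dom_closed T) u"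
    and v_C2: "C2_test (dom_open T) v vt vS vH vSS vSH vHH" and v_cont: "continuous_on (dom_closed T) v"
    and sub: "\<And>S H t. (S, H, t) \<in> dom_open T \<Longrightarrow>
      0 \<le> pde_op mu sig a b r rho alpha S H (v (S, H, t)) (vt (S, H, t)) (vS (S, H, t)) (vH (S, H, t))
        (vSS (S, H, t)) (vSH (S, H, t)) (vHH (S, H, t))"
    and terminal: "\<And>S H. 0 < S \<Longrightarrow> 0 < H \<Longrightarrow> v (S, H, T) \<le> u (S, H, T)"
    and negligible: "weight_negligible T (\<lambda>x. v x - u x)"
    and "x \<in> dom_closed T"
  shows "v x \<le> u x"
proof -
  have "- u x \<le> - v x"
  proof (rule comparison_with_classical_supersolution[OF \<open>0 < T\<close> \<open>0 \<le> r\<close>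
        visc_super_imp_visc_sub_uminus[OF super] continuous_on_minus[OF u_cont]
        C2_test_uminus[OF v_C2] continuous_on_minus[OF v_cont] _ _ _ \<open>x \<in> dom_closed T\<close>])
    show "pde_op mu sig a b r rho (- alpha) S H (- v (S, H, t)) (- vt (S, H, t)) (- vS (S, H, t))
        (- vH (S, H, t)) (- vSS (S, H, t)) (- vSH (S, H, t)) (- vHH (S, H, t)) \<le> 0"
      if "(S, H, t) \<in> dom_open T" for S H t
      using sub[OF that] by (simp add: pde_op_uminus)
    show "weight_negligible T (\<lambda>x. - u x - - v x)"
      using negligible by simp
  qed (use terminal in simp)
  then show ?thesis
    by simp
qed

theorem corollary2p6:
  fixes T r rho alpha K mu sig a b :: real
    and P :: "real \<times> real \<times> real \<Rightarrow> real"
  assumes "T > 0" and "r \<ge> 0" and "-1 \<le> rho" and "rho \<le> 1" and "alpha \<ge> 0" and "K > 0"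
    and "mu > 0" and "sig > 0" and "a > 0" and "b > 0"
    and "writer_put_price mu sig a b r rho alpha T K P"
  shows "\<forall>S H t. 0 < S \<longrightarrow> 0 < H \<longrightarrow> 0 \<le> t \<longrightarrow> t < T \<longrightarrow>
    (let tau = T - t;
         mut = mu - (a - r) * rho * sig / b;
         delta = r - mut + alpha * sqrt (1 - rho\<^sup>2) * sig
     in P (S, H, t) =
          K * exp (- r * tau) * Phi ((ln (K / S) - (r - delta - 1/2 * sig\<^sup>2) * tau) / (sig * sqrt tau))
        - S * exp (- delta * tau) * Phi ((ln (K / S) - (r - delta + 1/2 * sig\<^sup>2) * tau) / (sig * sqrt tau)))"
proof -
  define dl where "dl = r - (mu - (a - r) * rho * sig / b) + alpha * sqrt (1 - rho\<^sup>2) * sig"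
  interpret black_scholes K r dl sig
    using assms by unfold_locales
  have P_cont: "continuous_on (dom_closed T) P" and "growth_class T P"
    and P_sub: "visc_sub mu sig a b r rho alpha T P" and P_super: "visc_super mu sig a b r rho alpha T P"
    and P_T: "\<And>S H. 0 < S \<Longrightarrow> 0 < H \<Longrightarrow> P (S, H, T) = max (K - S) 0"
    using assms(11) unfolding writer_put_price_def by auto
  have "weight_negligible T P" and "weight_negligible T (price T)"
    using weight_negligible_if_growth_class[OF \<open>growth_class T P\<close>]
      weight_negligible_if_affine_bound[of T "price T", OF abs_price_le] by auto
  then have negl: "weight_negligible T (\<lambda>x. P x - price T x)"
    and negl': "weight_negligible T (\<lambda>x. price T x - P x)"
    by (simp_all add: weight_negligible_diff)
  have P_price: "P x = price T x" if "x \<in> dom_closed T" for x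
  proof (rule antisym)
    show "P x \<le> price T x"
      by (rule comparison_with_classical_supersolution[OF \<open>T > 0\<close> \<open>r \<ge> 0\<close> P_sub P_cont
            C2_test_price continuous_on_price _ _ negl that])
         (use price_solves_pde[OF dl_def] P_T price_at_maturity in auto)
    show "price T x \<le> P x"
      by (rule comparison_with_classical_subsolution[OF \<open>T > 0\<close> \<open>r \<ge> 0\<close> P_super P_cont
            C2_test_price continuous_on_price _ _ negl' that])
         (use price_solves_pde[OF dl_def] P_T price_at_maturity in auto)
  qed
  then show ?thesis
    unfolding Let_def dl_def[symmetric] by (auto simp: dom_closed_def price_def put_def d_def)
qed

end
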